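(* Let $p_1=2,p_2,p_3,\dots$ be the consecutive primes, let $\chi$ be any Dirichlet character, and let $n\ge31$ (so $p_n\ge127$). Then $$B_\chi=R_1\,A\,L(2,\chi)L(3,\chi)L(4,\chi)\prod_{k=1}^{n}\Bigl(1+\frac{\chi(p_k)}{p_k(p_k^2-p_k-1)}\Bigr)\Bigl(1-\frac{\chi(p_k)}{p_k^3}\Bigr)\Bigl(1-\frac{\chi(p_k)}{p_k^4}\Bigr)$$ for a complex number $R_1$ satisfying $$\frac{1}{1+p_{n+1}^{-3.85}}\le|R_1|\le1+\frac{1}{p_{n+1}^{3.85}}.$$
   Context: $A=\prod_p\bigl(1-\frac{1}{p(p-1)}\bigr)$ (Artin's constant, product over primes). For a Dirichlet character $\chi$, $L(s,\chi)=\sum_{n\ge1}\chi(n)n^{-s}$ and $B_\chi=\prod_p\Bigl(1+\frac{(\chi(p)-1)p}{(p^2-\chi(p))(p-1)}\Bigr)$, the product over all primes $p$. *)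

theory Defs
  imports "HOL-Analysis.Analysis" "HOL-Computational_Algebra.Primes" "HOL-Library.Infinite_Set"
begin

definition dirichlet_character :: "nat \<Rightarrow> (nat \<Rightarrow> complex) \<Rightarrow> bool" where
  "dirichlet_character q chi \<longleftrightarrow> q > 0 \<and> chi 1 = 1 \<and>
     (\<forall>m n. chi (m * n) = chi m * chi n) \<and>
     (\<forall>n. chi (n + q) = chi n) \<and>
     (\<forall>n. chi n \<noteq> 0 \<longleftrightarrow> coprime n q)"

text \<open>p_k with 1-based indexing: prime_seq 1 = 2, prime_seq 2 = 3, ...\<close>
definition prime_seq :: "nat \<Rightarrow> nat" where
  "prime_seq k = Infinite_Set.enumerate {p. prime p} (k - 1)"

definition dirichlet_L :: "(nat \<Rightarrow> complex) \<Rightarrow> nat \<Rightarrow> complex" where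
  "dirichlet_L chi s = (\<Sum>n. chi (Suc n) / of_nat (Suc n) ^ s)"

definition artin_A :: real where
  "artin_A = (\<Prod>k. 1 - 1 / (real (prime_seq (Suc k)) * (real (prime_seq (Suc k)) - 1)))"

definition B_char :: "(nat \<Rightarrow> complex) \<Rightarrow> complex" where
  "B_char chi = (\<Prod>k. (let p = prime_seq (Suc k) in
      1 + ((chi p - 1) * of_nat p) / ((of_nat p ^ 2 - chi p) * (of_nat p - 1))))"

end

theory Submission
  imports Defs "HOL-Number_Theory.Number_Theory"
begin

text \<open>
  For \<open>|c| \<le> 1\<close> the factor of \<open>B\<^sub>\<chi>\<close> at \<open>p\<close> satisfies
  \<open>B\<^sub>p (1 - c/p\<^sup>2) = (1 - 1/(p(p-1))) (1 + c/(p(p\<^sup>2-p-1)))\<close>, with \<open>c = \<chi>(p)\<close>.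
  Multiplying \<open>B\<^sub>\<chi>\<close> by the Euler products of \<open>1/L(s,\<chi>)\<close>, \<open>s = 2,3,4\<close>, therefore
  gives \<open>A\<close> times the product over all primes of the correction factors
  \<open>u\<^sub>p = (1 + c/(p(p\<^sup>2-p-1))) (1 - c/p\<^sup>3) (1 - c/p\<^sup>4)\<close>, and \<open>R\<^sub>1\<close> is the tail of
  this product beyond \<open>p\<^sub>n\<close>. Since \<open>|u\<^sub>p - 1| \<le> 3/p\<^sup>5\<close>, telescoping bounds the total
  deviation of the tail by \<open>S = 3/(4(P-1)\<^sup>4)\<close> with \<open>P = p\<^sub>n\<^sub>+\<^sub>1\<close>, so
  \<open>1 - S \<le> |R\<^sub>1| \<le> 1/(1 - S)\<close>; for \<open>P \<ge> 33\<close> (guaranteed by \<open>n \<ge> 31\<close>) this is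
  within the claimed bounds.
\<close>

section \<open>Primes\<close>

lemma prime_seq_Suc: "prime_seq (Suc k) = enumerate {p. prime p} k"
  by (simp add: prime_seq_def)

lemma prime_prime_seq_Suc: "prime (prime_seq (Suc k))"
  unfolding prime_seq_Suc using enumerate_in_set[OF primes_infinite] by simp

lemma strict_mono_prime_seq_Suc: "strict_mono (\<lambda>k. prime_seq (Suc k))"
  unfolding prime_seq_Suc by (rule strict_monoI) (simp add: primes_infinite)

lemma prime_seq_Suc_ge: "k + 2 \<le> prime_seq (Suc k)"
proof (induction k)
  case 0
  show ?case using prime_ge_2_nat[OF prime_prime_seq_Suc[of 0]] by simp
next
  case (Suc k)
  then show ?case using strict_monoD[OF strict_mono_prime_seq_Suc, of k "Suc k"] by simp
qed

lemma prime_seq_Suc_add_ge: "prime_seq (Suc j) + i \<le> prime_seq (Suc (j + i))"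
proof (induction i)
  case (Suc i)
  then show ?case
    using strict_monoD[OF strict_mono_prime_seq_Suc, of "j + i" "Suc (j + i)"] by simp
qed simp

lemma prime_eq_prime_seq_Suc:
  assumes "prime r"
  obtains k where "prime_seq (Suc k) = r" "k + 2 \<le> r"
proof -
  obtain k where "enumerate {p. prime p} k = r"
    using enumerate_Ex[OF primes_infinite] assms by blast
  then show thesis using that prime_seq_Suc_ge[of k] by (simp add: prime_seq_Suc)
qed

lemma prime_seq_dvd_below:
  assumes "2 \<le> m" "m < N + 2"
  obtains k where "k < N" "prime_seq (Suc k) dvd m"
proof -
  obtain r where r: "prime r" "r dvd m"
    using prime_factor_nat[of m] assms(1) by auto
  obtain k where k: "prime_seq (Suc k) = r" "k + 2 \<le> r"
    using r(1) by (rule prime_eq_prime_seq_Suc)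
  moreover have "r \<le> m"
    using r assms(1) by (intro dvd_imp_le) auto
  ultimately have "k < N"
    using assms(2) by linarith
  then show thesis
    using that r(2) k(1) by blast
qed

lemma prime_dvd_prime_mult_iff:
  fixes p r j :: nat
  assumes "prime p" "prime r" "r \<noteq> p"
  shows "r dvd p * j \<longleftrightarrow> r dvd j"
proof -
  have "\<not> r dvd p"
    using assms primes_dvd_imp_eq by blast
  then show ?thesis
    using prime_dvd_mult_iff[OF assms(2)] by blast
qed

section \<open>Euler products of Dirichlet L-series\<close>

lemma dirichlet_character_mod:
  assumes "dirichlet_character q chi"
  shows "chi (n mod q) = chi n"
proof -
  have per: "chi (m + q) = chi m" for m
    using assms unfolding dirichlet_character_def by blast
  have "chi (n mod q + i * q) = chi (n mod q)" for i
  proof (induction i)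
    case (Suc i)
    have "n mod q + Suc i * q = (n mod q + i * q) + q" by simp
    then show ?case by (simp only: per Suc.IH)
  qed simp
  then show ?thesis by (metis mod_div_mult_eq)
qed

lemma dirichlet_character_norm_le_1:
  assumes chi: "dirichlet_character q chi"
  shows "norm (chi n) \<le> 1"
proof (cases "coprime n q")
  case False
  then show ?thesis using chi unfolding dirichlet_character_def by fastforce
next
  case True
  have q: "q > 0" and mult: "\<And>m n. chi (m * n) = chi m * chi n" and chi_1: "chi 1 = 1"
    using chi unfolding dirichlet_character_def by blast+
  have pow: "chi (n ^ k) = chi n ^ k" for k
    by (induction k) (simp_all add: mult chi_1[unfolded One_nat_def])
  have "(n ^ totient q) mod q = 1 mod q"
    using euler_theorem[OF True] unfolding cong_def .
  then have "chi n ^ totient q = 1"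
    using dirichlet_character_mod[OF chi] pow chi_1 by metis
  moreover have "totient q > 0"
    using q by simp
  ultimately have "norm (chi n) = 1"
    using power_eq_1_iff[of "chi n" "totient q"] by (metis less_irrefl)
  then show ?thesis by simp
qed

lemma has_sum_sieve:
  fixes f :: "nat \<Rightarrow> 'a :: real_normed_field"
  assumes mult: "\<And>m n. f (m * n) = f m * f n"
    and sum: "(f has_sum S) UNIV"
    and T: "finite T" "\<And>r. r \<in> T \<Longrightarrow> prime r"
  shows "((\<lambda>m. if \<exists>r\<in>T. r dvd m then 0 else f m) has_sum S * (\<Prod>r\<in>T. 1 - f r)) UNIV"
  using T
proof (induction T rule: finite_induct)
  case empty
  then show ?case using sum by simp
next
  case (insert p T)
  define sifted where "sifted T m = (if \<exists>r\<in>T. r dvd m then 0 else f m)" for T m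
  define X where "X = S * (\<Prod>r\<in>T. 1 - f r)"
  have IH: "(sifted T has_sum X) UNIV"
    using insert unfolding sifted_def X_def by simp
  have p: "prime p"
    using insert by simp
  define multiples where "multiples m = (if p dvd m then sifted T m else 0)" for m
  have "r dvd p * j \<longleftrightarrow> r dvd j" if "r \<in> T" for r j
    using insert that p by (intro prime_dvd_prime_mult_iff) auto
  then have multiples_mult: "multiples (p * j) = f p * sifted T j" for j
    unfolding multiples_def sifted_def by (simp add: mult)
  have "((multiples \<circ> (\<lambda>j. p * j)) has_sum f p * X) UNIV"
    using has_sum_cmult_right[OF IH] by (simp add: o_def multiples_mult)
  moreover have "inj (\<lambda>j. p * j)"
    using p prime_gt_0_nat by (auto simp: inj_on_def)
  ultimately have "(multiples has_sum f p * X) (range (\<lambda>j. p * j))"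
    using has_sum_reindex by blast
  then have "(multiples has_sum f p * X) UNIV"
    by (rule has_sum_cong_neutral[THEN iffD1, rotated -1]) (auto simp: multiples_def)
  then have "((\<lambda>m. sifted T m + - multiples m) has_sum X + - (f p * X)) UNIV"
    using IH by (intro has_sum_add has_sum_uminusI)
  moreover have "sifted T m + - multiples m = sifted (insert p T) m" for m
    unfolding sifted_def multiples_def by auto
  moreover have "X + - (f p * X) = S * (\<Prod>r\<in>insert p T. 1 - f r)"
    using insert unfolding X_def by (simp add: algebra_simps)
  ultimately show ?case
    unfolding sifted_def by simp
qed

lemma tendsto_suminf_tail:
  assumes "summable f"
  shows "(\<lambda>N. \<Sum>i. f (i + N)) \<longlonglongrightarrow> (0 :: 'a :: real_normed_vector)"
proof -
  have "(\<lambda>N. suminf f - (\<Sum>i<N. f i)) \<longlonglongrightarrow> suminf f - suminf f"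
    by (intro tendsto_diff tendsto_const summable_LIMSEQ assms)
  moreover have "(\<Sum>i. f (i + N)) = suminf f - (\<Sum>i<N. f i)" for N
    using suminf_split_initial_segment[OF assms, of N] by (simp add: eq_diff_eq)
  ultimately show ?thesis
    by simp
qed

lemma norm_sums_le_tail:
  fixes D :: "nat \<Rightarrow> 'a :: banach"
  assumes "D sums s" and "\<And>m. m < K \<Longrightarrow> D m = 0"
    and "\<And>m. K \<le> m \<Longrightarrow> norm (D m) \<le> g m" and "summable g"
  shows "norm s \<le> (\<Sum>i. g (i + K))"
proof -
  have head: "(\<Sum>i<K. D i) = 0"
    using assms(2) by (intro sum.neutral) simp
  have "(\<lambda>i. D (i + K)) sums s"
    using sums_iff_shift[of D K s] assms(1) by (simp only: head add_0_right)
  then have "s = (\<Sum>i. D (i + K))"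
    by (rule sums_unique)
  also have "norm \<dots> \<le> (\<Sum>i. g (i + K))"
    using assms(3,4) by (intro norm_suminf_le) (simp_all add: summable_iff_shift)
  finally show ?thesis .
qed

lemma norm_euler_partial_product_sub_1_le:
  fixes f :: "nat \<Rightarrow> 'a :: {real_normed_field, banach}"
  assumes f0: "f 0 = 0" and f1: "f 1 = 1" and mult: "\<And>m n. f (m * n) = f m * f n"
    and summable: "summable (\<lambda>n. norm (f n))"
  shows "norm ((\<Sum>n. f n) * (\<Prod>k<N. 1 - f (prime_seq (Suc k))) - 1)
           \<le> (\<Sum>i. norm (f (i + (N + 2))))"
proof -
  define E where "E = (\<Sum>n. f n) * (\<Prod>k<N. 1 - f (prime_seq (Suc k)))"
  define T where "T = (\<lambda>k. prime_seq (Suc k)) ` {..<N}"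
  define D where "D m = (if \<exists>r\<in>T. r dvd m then 0 else f m) - (if m = 1 then 1 else 0)" for m
  have T: "finite T" "\<And>r. r \<in> T \<Longrightarrow> prime r"
    unfolding T_def using prime_prime_seq_Suc by auto
  have "(f has_sum (\<Sum>n. f n)) UNIV"
    by (rule norm_summable_imp_has_sum[OF summable summable_sums[OF summable_norm_cancel[OF summable]]])
  moreover have "(\<Prod>r\<in>T. 1 - f r) = (\<Prod>k<N. 1 - f (prime_seq (Suc k)))"
    unfolding T_def
    by (intro prod.reindex[unfolded o_def] strict_mono_imp_inj_on strict_mono_prime_seq_Suc)
  ultimately have "(\<lambda>m. if \<exists>r\<in>T. r dvd m then 0 else f m) sums E"
    unfolding E_def using has_sum_imp_sums[OF has_sum_sieve[OF mult _ T]] by simp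
  then have "D sums (E - 1)"
    unfolding D_def using sums_single[of 1 "\<lambda>_. 1"] by (intro sums_diff) auto
  \<comment> \<open>Sieving out the first \<open>N\<close> primes leaves, besides \<open>f 1\<close>,
    only terms \<open>f m\<close> with \<open>m \<ge> N + 2\<close>.\<close>
  moreover have "D m = 0" if m: "m < N + 2" for m
  proof (cases "m \<le> 1")
    case True
    moreover have "1 \<notin> T"
      using T(2) by force
    ultimately show ?thesis
      unfolding D_def using f0 f1 by (cases m) auto
  next
    case False
    then have "2 \<le> m"
      by simp
    then obtain k where "k < N" "prime_seq (Suc k) dvd m"
      using m by (rule prime_seq_dvd_below)
    then show ?thesis
      unfolding D_def T_def using False by auto
  qed
  moreover have "norm (D m) \<le> norm (f m)" if "N + 2 \<le> m" for m
    unfolding D_def using that by simp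
  ultimately show ?thesis
    unfolding E_def using summable by (intro norm_sums_le_tail)
qed

lemma euler_product_tendsto:
  fixes f :: "nat \<Rightarrow> 'a :: {real_normed_field, banach}"
  assumes "f 0 = 0" and "f 1 = 1" and "\<And>m n. f (m * n) = f m * f n"
    and summable: "summable (\<lambda>n. norm (f n))"
  shows "(\<lambda>N. (\<Sum>n. f n) * (\<Prod>k<N. 1 - f (prime_seq (Suc k)))) \<longlonglongrightarrow> 1"
proof -
  have "(\<lambda>N. \<Sum>i. norm (f (i + (N + 2)))) \<longlonglongrightarrow> 0"
    using LIMSEQ_ignore_initial_segment[OF tendsto_suminf_tail[OF summable], of 2]
    by (simp add: add.assoc)
  then have "(\<lambda>N. (\<Sum>n. f n) * (\<Prod>k<N. 1 - f (prime_seq (Suc k))) - 1) \<longlonglongrightarrow> 0"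
    by (rule Lim_null_comparison[OF always_eventually, rotated])
      (intro allI norm_euler_partial_product_sub_1_le assms)
  then show ?thesis
    by (simp add: LIM_zero_iff)
qed

lemma dirichlet_L_euler_product:
  assumes chi: "dirichlet_character q chi" and s: "2 \<le> s"
  shows "(\<lambda>N. dirichlet_L chi s *
      (\<Prod>k<N. 1 - chi (prime_seq (Suc k)) / of_nat (prime_seq (Suc k)) ^ s)) \<longlonglongrightarrow> 1"
proof -
  define f where "f m = chi m / of_nat m ^ s" for m
  have mult: "f (m * n) = f m * f n" for m n
    using chi unfolding f_def dirichlet_character_def by (simp add: power_mult_distrib)
  have "norm (f m) \<le> inverse (real m ^ 2)" for m
  proof (cases "m = 0")
    case False
    have "norm (f m) \<le> 1 / real m ^ s"
      unfolding f_def using dirichlet_character_norm_le_1[OF chi, of m]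
      by (simp add: norm_divide norm_power divide_right_mono)
    also have "\<dots> \<le> 1 / real m ^ 2"
      using False s by (intro divide_left_mono power_increasing) auto
    finally show ?thesis
      by (simp add: divide_inverse)
  qed (use s in \<open>simp add: f_def\<close>)
  then have summable: "summable (\<lambda>m. norm (f m))"
    by (intro summable_comparison_test[OF _ inverse_power_summable[of 2]]) auto
  have "dirichlet_L chi s = (\<Sum>n. f n)"
    using suminf_split_head[OF summable_norm_cancel[OF summable]] s
    unfolding dirichlet_L_def f_def by simp
  then show ?thesis
    using euler_product_tendsto[OF _ _ mult summable] chi s
    unfolding f_def dirichlet_character_def by simp
qed

lemma dirichlet_L_nonzero:
  assumes "dirichlet_character q chi" and "2 \<le> s"
  shows "dirichlet_L chi s \<noteq> 0"
proof
  assume "dirichlet_L chi s = 0"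
  then have "(\<lambda>N. 0 :: complex) \<longlonglongrightarrow> 1"
    using dirichlet_L_euler_product[OF assms] by simp
  then show False
    using LIMSEQ_unique[OF tendsto_const] by fastforce
qed

lemma tendsto_inverse_dirichlet_L:
  assumes "dirichlet_character q chi" and "2 \<le> s"
  shows "(\<lambda>N. \<Prod>k<N. 1 - chi (prime_seq (Suc k)) / of_nat (prime_seq (Suc k)) ^ s)
           \<longlonglongrightarrow> 1 / dirichlet_L chi s"
  using tendsto_divide[OF dirichlet_L_euler_product[OF assms] tendsto_const dirichlet_L_nonzero[OF assms]]
    dirichlet_L_nonzero[OF assms]
  by simp

section \<open>Local factors\<close>

definition artin_factor :: "nat \<Rightarrow> real" where
  "artin_factor p = 1 - 1 / (real p * (real p - 1))"

definition B_factor :: "complex \<Rightarrow> nat \<Rightarrow> complex" where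
  "B_factor c p = 1 + ((c - 1) * of_nat p) / ((of_nat p ^ 2 - c) * (of_nat p - 1))"

definition correction_factor :: "complex \<Rightarrow> nat \<Rightarrow> complex" where
  "correction_factor c p = (1 + c / (of_nat p * (of_nat p ^ 2 - of_nat p - 1))) *
     (1 - c / of_nat p ^ 3) * (1 - c / of_nat p ^ 4)"

lemma artin_A_eq_prodinf: "artin_A = prodinf (\<lambda>k. artin_factor (prime_seq (Suc k)))"
  by (simp add: artin_A_def artin_factor_def)

lemma B_char_eq_prodinf:
  "B_char chi = prodinf (\<lambda>k. B_factor (chi (prime_seq (Suc k))) (prime_seq (Suc k)))"
  by (simp add: B_char_def B_factor_def Let_def)

lemma euler_factor_identity:
  fixes x c :: "'a :: field"
  assumes "x \<noteq> 0" "x - 1 \<noteq> 0" "x ^ 2 - c \<noteq> 0" "x ^ 2 - x - 1 \<noteq> 0"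
  shows "(1 + ((c - 1) * x) / ((x ^ 2 - c) * (x - 1))) * (1 - c / x ^ 2)
    = (1 - 1 / (x * (x - 1))) * (1 + c / (x * (x ^ 2 - x - 1)))"
  \<comment> \<open>both sides equal \<open>(x\<^sup>3 - x\<^sup>2 - x + c) / (x\<^sup>2 (x - 1))\<close>\<close>
  using assms by (simp add: divide_simps) (simp add: algebra_simps power2_eq_square power3_eq_cube)

lemma B_factor_mult_euler_factors:
  assumes p: "2 \<le> p" and c: "norm c \<le> 1"
  shows "B_factor c p * (1 - c / of_nat p ^ 2) * (1 - c / of_nat p ^ 3) * (1 - c / of_nat p ^ 4)
    = of_real (artin_factor p) * correction_factor c p"
proof -
  define x :: complex where "x = of_nat p"
  have "real p \<ge> 2"
    using p by simp
  then have "real p * real p \<ge> 2 * real p"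
    by (intro mult_right_mono) auto
  then have "real p ^ 2 - real p - 1 \<noteq> 0"
    unfolding power2_eq_square using \<open>real p \<ge> 2\<close> by linarith
  have "x ^ 2 - x - 1 = of_real (real p ^ 2 - real p - 1)"
    unfolding x_def by simp
  also have "\<dots> \<noteq> 0"
    using \<open>real p ^ 2 - real p - 1 \<noteq> 0\<close> by (simp only: of_real_eq_0_iff not_False_eq_True)
  finally have "x ^ 2 - x - 1 \<noteq> 0" .
  moreover have "norm (x ^ 2) = real p * real p"
    unfolding x_def by (simp add: norm_mult power2_eq_square)
  then have "norm c < norm (x ^ 2)"
    using c \<open>real p * real p \<ge> 2 * real p\<close> \<open>real p \<ge> 2\<close> by linarith
  then have "x ^ 2 - c \<noteq> 0"
    by auto
  moreover have "x \<noteq> 0" "x - 1 \<noteq> 0"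
    unfolding x_def using p by auto
  moreover have "of_real (artin_factor p) = 1 - 1 / (x * (x - 1))"
    unfolding artin_factor_def x_def by simp
  ultimately show ?thesis
    unfolding B_factor_def correction_factor_def x_def[symmetric]
    by (simp add: euler_factor_identity mult.assoc)
qed

lemma norm_B_factor_sub_1_le:
  assumes p: "2 \<le> p" and c: "norm c \<le> 1"
  shows "norm (B_factor c p - 1) \<le> 2 / (real p - 1) ^ 2"
proof -
  define x where "x = real p"
  have x: "2 \<le> x"
    using p by (simp add: x_def)
  have "norm (c - 1) \<le> 2"
    using norm_triangle_ineq4[of c 1] c by simp
  moreover have "x ^ 2 - 1 \<le> norm (of_nat p ^ 2 - c)"
    using norm_triangle_ineq2[of "of_nat p ^ 2" c] c by (simp add: x_def norm_power)
  moreover have "norm (of_nat p - 1 :: complex) = x - 1"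
  proof -
    have "(of_nat p - 1 :: complex) = of_real (x - 1)"
      by (simp add: x_def)
    then have "norm (of_nat p - 1 :: complex) = \<bar>x - 1\<bar>"
      by (simp only: norm_of_real)
    then show ?thesis
      using x by simp
  qed
  moreover have "1 \<le> x ^ 2 - 1"
    using x mult_mono[OF x x] by (simp add: power2_eq_square)
  ultimately have "norm (B_factor c p - 1) \<le> 2 * x / ((x ^ 2 - 1) * (x - 1))"
    unfolding B_factor_def using x
    by (simp add: norm_mult norm_divide x_def[symmetric])
       (intro frac_le mult_right_mono mult_mono; simp)
  also have "\<dots> = 2 * x / ((x + 1) * (x - 1) ^ 2)"
    by (simp add: algebra_simps power2_eq_square)
  also have "\<dots> \<le> (x + 1) * 2 / ((x + 1) * (x - 1) ^ 2)"
    using x by (intro divide_right_mono) auto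
  also have "\<dots> = 2 / (x - 1) ^ 2"
    by (rule mult_divide_mult_cancel_left) (use x in simp)
  finally show ?thesis
    by (simp add: x_def)
qed

lemma artin_factor_pos:
  assumes "2 \<le> p"
  shows "0 < artin_factor p"
proof -
  have "2 * 1 \<le> real p * (real p - 1)"
    using assms by (intro mult_mono) auto
  then show ?thesis
    unfolding artin_factor_def by simp
qed

lemma abs_artin_factor_sub_1_le:
  assumes "2 \<le> p"
  shows "\<bar>artin_factor p - 1\<bar> \<le> 1 / (real p - 1) ^ 2"
proof -
  have "(real p - 1) ^ 2 \<le> real p * (real p - 1)"
    using assms by (simp add: power2_eq_square mult_right_mono)
  moreover have "0 < (real p - 1) ^ 2"
    using assms by simp
  ultimately have "1 / (real p * (real p - 1)) \<le> 1 / (real p - 1) ^ 2"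
    by (intro frac_le) auto
  moreover have "0 < real p * (real p - 1)"
    using assms by simp
  ultimately show ?thesis
    unfolding artin_factor_def by simp
qed

lemma correction_factor_nonzero:
  assumes p: "2 \<le> p" and c: "norm c \<le> 1"
  shows "correction_factor c p \<noteq> 0"
proof -
  have nonzero: "1 + c / d \<noteq> 0" "1 - c / d \<noteq> 0" if "2 \<le> norm d" for d :: complex
  proof -
    have "norm (c / d) < 1"
      using c that by (simp add: norm_divide divide_less_eq)
    then show "1 + c / d \<noteq> 0" "1 - c / d \<noteq> 0"
      by (auto simp: add_eq_0_iff)
  qed
  define x where "x = real p"
  have x: "2 \<le> x"
    using p by (simp add: x_def)
  have "2 * x \<le> x * x"
    using x by (intro mult_right_mono) auto
  then have "1 \<le> x ^ 2 - x - 1"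
    unfolding power2_eq_square using x by linarith
  then have "2 * 1 \<le> x * (x ^ 2 - x - 1)"
    using x by (intro mult_mono) auto
  moreover have "(of_nat p * (of_nat p ^ 2 - of_nat p - 1) :: complex) = of_real (x * (x ^ 2 - x - 1))"
    by (simp add: x_def)
  ultimately have "2 \<le> norm (of_nat p * (of_nat p ^ 2 - of_nat p - 1) :: complex)"
    by (simp only: norm_of_real)
  moreover have "2 \<le> norm (of_nat p ^ k :: complex)" if "0 < k" for k
  proof -
    have "x \<le> x ^ k"
      using x that by (intro self_le_power) auto
    moreover have "norm (of_nat p ^ k :: complex) = x ^ k"
      by (simp add: norm_power x_def)
    ultimately show ?thesis
      using x by linarith
  qed
  ultimately have "1 + c / (of_nat p * (of_nat p ^ 2 - of_nat p - 1)) \<noteq> 0"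
      "1 - c / of_nat p ^ 3 \<noteq> 0" "1 - c / of_nat p ^ 4 \<noteq> 0"
    by (simp_all only: nonzero zero_less_numeral not_False_eq_True)
  then show ?thesis
    unfolding correction_factor_def by simp
qed

lemma norm_triple_product_sub_1_le:
  fixes c :: complex and a b d :: real
  assumes c: "norm c \<le> 1"
  shows "norm ((1 + c * of_real a) * (1 - c * of_real b) * (1 - c * of_real d) - 1)
           \<le> \<bar>a - b - d\<bar> + \<bar>b * d - a * b - a * d\<bar> + \<bar>a * b * d\<bar>"
proof -
  have power_bound: "norm (c ^ k * of_real r) \<le> \<bar>r\<bar>" for k r
  proof -
    have "norm c ^ k \<le> 1"
      using c by (simp add: power_le_one)
    then have "norm c ^ k * \<bar>r\<bar> \<le> \<bar>r\<bar>"
      by (simp add: mult_left_le_one_le)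
    then show ?thesis
      by (simp add: norm_mult norm_power del: of_real_diff of_real_mult)
  qed
  have "(1 + c * of_real a) * (1 - c * of_real b) * (1 - c * of_real d) - 1
      = c ^ 1 * of_real (a - b - d) + c ^ 2 * of_real (b * d - a * b - a * d) + c ^ 3 * of_real (a * b * d)"
    by (simp add: algebra_simps power2_eq_square power3_eq_cube)
  also have "norm \<dots> \<le> norm (c ^ 1 * of_real (a - b - d)) + norm (c ^ 2 * of_real (b * d - a * b - a * d))
      + norm (c ^ 3 * of_real (a * b * d))"
    by (meson norm_triangle_le norm_triangle_ineq add_mono order_refl)
  also have "\<dots> \<le> \<bar>a - b - d\<bar> + \<bar>b * d - a * b - a * d\<bar> + \<bar>a * b * d\<bar>"
    by (intro add_mono power_bound)
  finally show ?thesis .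
qed

lemma correction_coefficients_first_order:
  fixes x :: real
  assumes x: "33 \<le> x"
  defines "X \<equiv> 1 / (x * (x ^ 2 - x - 1))" and "Y \<equiv> 1 / x ^ 3" and "Z \<equiv> 1 / x ^ 4"
  shows "0 \<le> X - Y - Z" and "X - Y - Z + X * Y + X * Z \<le> 5 / 2 * (1 / x ^ 5)"
proof -
  define t where "t = x ^ 2 - x - 1"
  have xx: "33 * x \<le> x * x"
    using x by (intro mult_right_mono) auto
  have t: "1 \<le> t"
    unfolding t_def power2_eq_square using x xx by linarith
  have x0: "x \<noteq> 0" and t0: "t \<noteq> 0"
    using x t by auto
  have "X - Y - Z = (x ^ 4 - x ^ 2 * t - x * t) / (x ^ 5 * t)"
    unfolding X_def Y_def Z_def t_def[symmetric] using x0 t0 by (simp add: field_simps power_eq_if)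
  also have "x ^ 4 - x ^ 2 * t - x * t = 2 * x ^ 2 + x"
    unfolding t_def by (simp add: algebra_simps power_eq_if)
  finally have first: "X - Y - Z = (2 * x ^ 2 + x) / (x ^ 5 * t)" .
  then show "0 \<le> X - Y - Z"
    using x t by simp
  have second: "X * Y + X * Z = (x + 1) / (x ^ 5 * t)"
    unfolding X_def Y_def Z_def t_def[symmetric] using x0 t0 by (simp add: field_simps power_eq_if)
  have "X - Y - Z + X * Y + X * Z = (2 * x ^ 2 + x) / (x ^ 5 * t) + (x + 1) / (x ^ 5 * t)"
    unfolding first[symmetric] second[symmetric] by simp
  also have "\<dots> = (2 * x ^ 2 + 2 * x + 1) / (x ^ 5 * t)"
    by (simp add: add_divide_distrib[symmetric] algebra_simps)
  also have "\<dots> \<le> (5 / 2 * t) / (x ^ 5 * t)"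
  proof (rule divide_right_mono)
    show "2 * x ^ 2 + 2 * x + 1 \<le> 5 / 2 * t"
      unfolding t_def power2_eq_square right_diff_distrib using x xx by linarith
    show "0 \<le> x ^ 5 * t"
      using x t by simp
  qed
  also have "\<dots> = 5 / 2 * (1 / x ^ 5)"
    using t0 by simp
  finally show "X - Y - Z + X * Y + X * Z \<le> 5 / 2 * (1 / x ^ 5)" .
qed

lemma correction_coefficients_bound:
  fixes x :: real
  assumes x: "33 \<le> x"
  defines "X \<equiv> 1 / (x * (x ^ 2 - x - 1))" and "Y \<equiv> 1 / x ^ 3" and "Z \<equiv> 1 / x ^ 4"
  shows "\<bar>X - Y - Z\<bar> + \<bar>Y * Z - X * Y - X * Z\<bar> + \<bar>X * Y * Z\<bar> \<le> 3 / x ^ 5"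
proof -
  define t where "t = x ^ 2 - x - 1"
  have xx: "33 * x \<le> x * x"
    using x by (intro mult_right_mono) auto
  have t: "1 \<le> t"
    unfolding t_def power2_eq_square using x xx by linarith
  have "x \<le> x ^ 3" "x ^ 3 * 1 \<le> x ^ 3 * t"
    using x t by (auto intro: self_le_power mult_left_mono)
  then have "4 \<le> x ^ 3 * t"
    using x by linarith
  have "X * Y * Z = 1 / (x ^ 3 * t) * (1 / x ^ 5)"
    unfolding X_def Y_def Z_def t_def[symmetric] by (simp add: power_eq_if)
  also have "\<dots> \<le> 1 / 4 * (1 / x ^ 5)"
    using \<open>4 \<le> x ^ 3 * t\<close> x by (intro mult_right_mono) (auto simp: field_simps)
  finally have XYZ: "X * Y * Z \<le> 1 / 4 * (1 / x ^ 5)" .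
  have "4 \<le> x ^ 2"
    using x xx unfolding power2_eq_square by linarith
  then have YZ: "Y * Z \<le> 1 / 4 * (1 / x ^ 5)"
    unfolding Y_def Z_def using x by (simp add: field_simps power_eq_if)
  have "0 \<le> X" "0 \<le> Y" "0 \<le> Z"
    unfolding X_def Y_def Z_def t_def[symmetric] using x t by auto
  then have "\<bar>X - Y - Z\<bar> + \<bar>Y * Z - X * Y - X * Z\<bar> + \<bar>X * Y * Z\<bar>
      \<le> (X - Y - Z + X * Y + X * Z) + Y * Z + X * Y * Z"
    using correction_coefficients_first_order(1)[OF x] unfolding X_def Y_def Z_def
    by (auto simp: abs_le_iff)
  also have "\<dots> \<le> 5 / 2 * (1 / x ^ 5) + 1 / 4 * (1 / x ^ 5) + 1 / 4 * (1 / x ^ 5)"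
    using correction_coefficients_first_order(2)[OF x] YZ XYZ unfolding X_def Y_def Z_def
    by (intro add_mono)
  also have "\<dots> = 3 / x ^ 5"
    by simp
  finally show ?thesis .
qed

lemma norm_correction_factor_sub_1_le:
  assumes p: "33 \<le> p" and c: "norm c \<le> 1"
  shows "norm (correction_factor c p - 1) \<le> 3 / real p ^ 5"
proof -
  define X where "X = 1 / (real p * (real p ^ 2 - real p - 1))"
  define Y where "Y = 1 / real p ^ 3"
  define Z where "Z = 1 / real p ^ 4"
  have "correction_factor c p = (1 + c * of_real X) * (1 - c * of_real Y) * (1 - c * of_real Z)"
    unfolding correction_factor_def X_def Y_def Z_def by (simp add: divide_inverse)
  also have "norm (\<dots> - 1) \<le> \<bar>X - Y - Z\<bar> + \<bar>Y * Z - X * Y - X * Z\<bar> + \<bar>X * Y * Z\<bar>"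
    by (rule norm_triple_product_sub_1_le[OF c])
  also have "\<dots> \<le> 3 / real p ^ 5"
    unfolding X_def Y_def Z_def by (rule correction_coefficients_bound) (use p in simp)
  finally show ?thesis .
qed

section \<open>The correction product\<close>

lemma convergent_prod_prime_seq:
  fixes f :: "nat \<Rightarrow> 'a :: {real_normed_field, banach}"
  assumes bound: "\<And>k. norm (f k - 1) \<le> C / (real (prime_seq (Suc k)) - 1) ^ 2"
  shows "convergent_prod f"
proof -
  have gap: "real (Suc k) \<le> real (prime_seq (Suc k)) - 1" for k
    using prime_seq_Suc_ge[of k] by simp
  have "0 \<le> C / (real (prime_seq (Suc 0)) - 1) ^ 2"
    using bound[of 0] norm_ge_zero order_trans by blast
  then have C: "0 \<le> C"
    using gap[of 0] by (simp add: zero_le_divide_iff)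
  have "norm (norm (f k - 1)) \<le> C * inverse (real (Suc k) ^ 2)" for k
  proof -
    have "C / (real (prime_seq (Suc k)) - 1) ^ 2 \<le> C / real (Suc k) ^ 2"
      using gap[of k] C by (intro divide_left_mono power_mono mult_pos_pos) auto
    then show ?thesis
      using bound[of k] by (simp add: divide_inverse)
  qed
  moreover have "summable (\<lambda>k. inverse (real (Suc k) ^ 2))"
    unfolding summable_Suc_iff[of "\<lambda>n. inverse (real n ^ 2)"]
    using inverse_power_summable[of 2, where 'a = real] by simp
  then have "summable (\<lambda>k. C * inverse (real (Suc k) ^ 2))"
    by (rule summable_mult)
  ultimately have "summable (\<lambda>k. norm (f k - 1))"
    by (rule summable_comparison_test'[rotated])
  then show ?thesis
    by (intro abs_convergent_prod_imp_convergent_prod summable_imp_abs_convergent_prod)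
qed

lemma tendsto_prod_lessThan_prodinf:
  fixes f :: "nat \<Rightarrow> 'a :: {real_normed_field, banach}"
  assumes "convergent_prod f"
  shows "(\<lambda>N. \<Prod>k<N. f k) \<longlonglongrightarrow> prodinf f"
  by (subst LIMSEQ_lessThan_iff_atMost) (rule convergent_prod_LIMSEQ[OF assms])

lemma convergent_prod_artin_factor: "convergent_prod (\<lambda>k. artin_factor (prime_seq (Suc k)))"
  using abs_artin_factor_sub_1_le[OF prime_ge_2_nat[OF prime_prime_seq_Suc]]
  by (intro convergent_prod_prime_seq[of _ 1]) simp

lemma convergent_prod_B_factor:
  assumes "\<And>m. norm (chi m) \<le> 1"
  shows "convergent_prod (\<lambda>k. B_factor (chi (prime_seq (Suc k))) (prime_seq (Suc k)))"
  using norm_B_factor_sub_1_le[OF prime_ge_2_nat[OF prime_prime_seq_Suc] assms]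
  by (intro convergent_prod_prime_seq[of _ 2])

lemma artin_A_nonzero: "artin_A \<noteq> 0"
proof -
  have "artin_factor (prime_seq (Suc k)) \<noteq> 0" for k
    using artin_factor_pos[OF prime_ge_2_nat[OF prime_prime_seq_Suc]]
    by (simp add: less_imp_neq[symmetric])
  then show ?thesis
    unfolding artin_A_eq_prodinf by (intro prodinf_nonzero convergent_prod_artin_factor)
qed

lemma tendsto_correction_product:
  assumes chi: "dirichlet_character q chi"
  shows "(\<lambda>N. \<Prod>k<N. correction_factor (chi (prime_seq (Suc k))) (prime_seq (Suc k)))
    \<longlonglongrightarrow> B_char chi / (of_real artin_A * dirichlet_L chi 2 * dirichlet_L chi 3 * dirichlet_L chi 4)"
proof -
  define p where "p k = prime_seq (Suc k)" for k
  define a where "a N = (\<Prod>k<N. artin_factor (p k))" for N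
  define e where "e s N = (\<Prod>k<N. 1 - chi (p k) / of_nat (p k) ^ s)" for s N
  define u where "u N = (\<Prod>k<N. correction_factor (chi (p k)) (p k))" for N
  note norm_chi = dirichlet_character_norm_le_1[OF chi]
  have "(\<Prod>k<N. B_factor (chi (p k)) (p k)) * e 2 N * e 3 N * e 4 N = of_real (a N) * u N" for N
    using B_factor_mult_euler_factors[OF prime_ge_2_nat[OF prime_prime_seq_Suc] norm_chi]
    unfolding a_def e_def u_def p_def by (simp add: prod.distrib[symmetric])
  moreover have "(\<lambda>N. (\<Prod>k<N. B_factor (chi (p k)) (p k)) * e 2 N * e 3 N * e 4 N)
      \<longlonglongrightarrow> B_char chi * (1 / dirichlet_L chi 2) * (1 / dirichlet_L chi 3) * (1 / dirichlet_L chi 4)"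
    unfolding B_char_eq_prodinf e_def p_def
    by (intro tendsto_mult tendsto_prod_lessThan_prodinf tendsto_inverse_dirichlet_L[OF chi]
        convergent_prod_B_factor norm_chi) auto
  moreover have "(\<lambda>N. of_real (a N)) \<longlonglongrightarrow> complex_of_real artin_A"
    unfolding artin_A_eq_prodinf a_def p_def
    by (intro tendsto_of_real tendsto_prod_lessThan_prodinf convergent_prod_artin_factor)
  ultimately have "(\<lambda>N. of_real (a N) * u N / of_real (a N)) \<longlonglongrightarrow>
      B_char chi * (1 / dirichlet_L chi 2) * (1 / dirichlet_L chi 3) * (1 / dirichlet_L chi 4)
        / of_real artin_A"
    using artin_A_nonzero by (intro tendsto_divide) auto
  moreover have "a N \<noteq> 0" for N
    using artin_factor_pos[OF prime_ge_2_nat[OF prime_prime_seq_Suc]] unfolding a_def p_def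
    by (simp add: less_imp_neq[symmetric])
  ultimately show ?thesis
    unfolding u_def p_def by (simp add: field_simps)
qed

lemma tendsto_correction_tail:
  assumes chi: "dirichlet_character q chi"
  defines "u k \<equiv> correction_factor (chi (prime_seq (Suc k))) (prime_seq (Suc k))"
  shows "(\<Prod>k<n. u k) \<noteq> 0"
    and "(\<lambda>J. \<Prod>j<J. u (n + j)) \<longlonglongrightarrow> B_char chi /
      (of_real artin_A * dirichlet_L chi 2 * dirichlet_L chi 3 * dirichlet_L chi 4) / (\<Prod>k<n. u k)"
proof -
  have "u k \<noteq> 0" for k
    unfolding u_def using prime_ge_2_nat[OF prime_prime_seq_Suc]
    by (intro correction_factor_nonzero dirichlet_character_norm_le_1[OF chi])
  then show nonzero: "(\<Prod>k<n. u k) \<noteq> 0"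
    by simp
  have "(\<Prod>k<J + n. u k) = (\<Prod>k<n. u k) * (\<Prod>j<J. u (n + j))" for J
    by (induction J) (simp_all add: ac_simps)
  then show "(\<lambda>J. \<Prod>j<J. u (n + j)) \<longlonglongrightarrow> B_char chi /
      (of_real artin_A * dirichlet_L chi 2 * dirichlet_L chi 3 * dirichlet_L chi 4) / (\<Prod>k<n. u k)"
    using tendsto_divide[OF LIMSEQ_ignore_initial_segment[OF tendsto_correction_product[OF chi], of n]
        tendsto_const nonzero] nonzero
    unfolding u_def by simp
qed

section \<open>Tail estimates\<close>

lemma inverse_power5_le_telescoping:
  fixes m :: real
  assumes m: "2 \<le> m"
  shows "1 / m ^ 5 \<le> (1 / (m - 1) ^ 4 - 1 / m ^ 4) / 4"
proof -
  define t where "t = m - 1"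
  have t: "1 \<le> t" and mt: "m = 1 + t"
    using m unfolding t_def by auto
  have "m * (m ^ 4 - t ^ 4) - 4 * t ^ 4 = 1 + 5 * t + 10 * t ^ 2 + 10 * t ^ 3"
    unfolding mt by (simp add: algebra_simps power2_eq_square power3_eq_cube power4_eq_xxxx)
  then have "4 * t ^ 4 \<le> m * (m ^ 4 - t ^ 4)"
    using t by (smt (verit) zero_le_power)
  then have "4 * t ^ 4 / (m ^ 5 * t ^ 4) \<le> m * (m ^ 4 - t ^ 4) / (m ^ 5 * t ^ 4)"
    using m t by (intro divide_right_mono) auto
  moreover have "4 * t ^ 4 / (m ^ 5 * t ^ 4) = 4 / m ^ 5"
    using t by simp
  moreover have "m * (m ^ 4 - t ^ 4) / (m ^ 5 * t ^ 4) = 1 / t ^ 4 - 1 / m ^ 4"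
    using m t by (simp add: field_simps power_eq_if)
  ultimately show ?thesis
    unfolding t_def by simp
qed

lemma sum_inverse_power5_le:
  fixes P :: real
  assumes P: "2 \<le> P"
  shows "(\<Sum>j<J. 1 / (P + real j) ^ 5) \<le> 1 / (4 * (P - 1) ^ 4)"
proof -
  define g where "g j = 1 / (P - 1 + real j) ^ 4" for j
  have "(\<Sum>j<J. 1 / (P + real j) ^ 5) \<le> (\<Sum>j<J. (g j - g (Suc j)) / 4)"
  proof (rule sum_mono)
    fix j
    have "1 / (P + real j) ^ 5 \<le> (1 / (P + real j - 1) ^ 4 - 1 / (P + real j) ^ 4) / 4"
      using P by (intro inverse_power5_le_telescoping) simp
    then show "1 / (P + real j) ^ 5 \<le> (g j - g (Suc j)) / 4"
      unfolding g_def by (simp add: algebra_simps)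
  qed
  also have "\<dots> = (g 0 - g J) / 4"
    using sum_lessThan_telescope'[of g J] by (simp add: sum_divide_distrib[symmetric])
  also have "\<dots> \<le> g 0 / 4"
    unfolding g_def using P by simp
  also have "\<dots> = 1 / (4 * (P - 1) ^ 4)"
    unfolding g_def by simp
  finally show ?thesis .
qed

lemma norm_prod_bounds:
  fixes w :: "nat \<Rightarrow> 'a :: real_normed_field"
  assumes "\<And>j. j < J \<Longrightarrow> norm (w j - 1) \<le> d j" "\<And>j. 0 \<le> d j" "(\<Sum>j<J. d j) < 1"
  shows "1 - (\<Sum>j<J. d j) \<le> norm (\<Prod>j<J. w j) \<and> norm (\<Prod>j<J. w j) \<le> 1 / (1 - (\<Sum>j<J. d j))"
  using assms
proof (induction J)
  case (Suc J)
  define S where "S = (\<Sum>j<J. d j)"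
  have S: "0 \<le> S" "S + d J < 1"
    using Suc.prems unfolding S_def by (simp_all add: sum_nonneg)
  have d: "0 \<le> d J" "d J < 1"
    using Suc.prems(2)[of J] S by auto
  have IH: "1 - S \<le> norm (\<Prod>j<J. w j)" "norm (\<Prod>j<J. w j) \<le> 1 / (1 - S)"
    using Suc.IH Suc.prems S d unfolding S_def by auto
  have "norm (w J - 1) \<le> d J"
    using Suc.prems(1)[of J] by simp
  then have w: "1 - d J \<le> norm (w J)" "norm (w J) \<le> 1 + d J"
    using norm_triangle_ineq3[of "w J" 1] norm_triangle_ineq[of "w J - 1" 1] by auto
  have "1 - (S + d J) \<le> (1 - S) * (1 - d J)"
    using S d by (simp add: algebra_simps)
  also have "\<dots> \<le> norm (\<Prod>j<J. w j) * norm (w J)"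
    using IH(1) w(1) d S by (intro mult_mono) auto
  finally have lower: "1 - (S + d J) \<le> norm (\<Prod>j<Suc J. w j)"
    by (simp add: norm_mult)
  have "norm (\<Prod>j<J. w j) * norm (w J) \<le> 1 / (1 - S) * (1 + d J)"
    using IH(2) w(2) d S by (intro mult_mono) auto
  also have "\<dots> \<le> 1 / (1 - (S + d J))"
  proof -
    have "(1 + d J) * (1 - (S + d J)) \<le> 1 - S"
      using S d by (simp add: algebra_simps)
    then show ?thesis
      using S d by (simp add: field_simps)
  qed
  finally have upper: "norm (\<Prod>j<Suc J. w j) \<le> 1 / (1 - (S + d J))"
    by (simp add: norm_mult)
  show ?case
    using lower upper unfolding S_def by simp
qed simp

lemma power4_pred_ge:
  fixes P :: real
  assumes P: "33 \<le> P"
  shows "3 * (P ^ 4 + 1) \<le> 4 * (P - 1) ^ 4"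
proof -
  \<comment> \<open>\<open>P - 1 \<ge> 14 P / 15\<close> and \<open>4 (14/15)\<^sup>4 > 3\<close>\<close>
  define Q where "Q = P - 1"
  have "(14 * P) ^ 4 \<le> (15 * Q) ^ 4" "(33 :: real) ^ 4 \<le> P ^ 4"
    using P unfolding Q_def by (intro power_mono; simp)+
  then have "38416 * P ^ 4 \<le> 50625 * Q ^ 4" "1185921 \<le> P ^ 4"
    by (simp_all add: power_mult_distrib)
  moreover have "3 * (a + 1) \<le> 4 * b" if "38416 * a \<le> 50625 * b" "1185921 \<le> a" for a b :: real
    using that by simp
  ultimately show ?thesis
    unfolding Q_def by blast
qed

lemma tail_error_bounds:
  fixes P :: real
  assumes P: "33 \<le> P"
  defines "S \<equiv> 3 / (4 * (P - 1) ^ 4)"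
  shows "S < 1" "1 / (1 + P powr (-3.85)) \<le> 1 - S" "1 / (1 - S) \<le> 1 + 1 / P powr 3.85"
proof -
  define E where "E = P powr 3.85"
  have E: "0 < E" "E \<le> P ^ 4"
    using P powr_mono[of "3.85" 4 P] unfolding E_def by (simp_all add: powr_realpow)
  have key: "S * (E + 1) \<le> 1"
    using power4_pred_ge[OF P] E P unfolding S_def by (simp add: field_simps)
  moreover have "0 < S"
    using P unfolding S_def by simp
  then have "S * 1 < S * (E + 1)"
    using E by (intro mult_strict_left_mono) auto
  ultimately show "S < 1"
    by simp
  have "E \<le> (1 - S) * (E + 1)"
    using key by (simp add: algebra_simps)
  have "P powr (-3.85) = 1 / E"
    unfolding E_def by (simp add: powr_minus_divide)
  then have "1 / (1 + P powr (-3.85)) = 1 / (1 + 1 / E)"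
    by (simp only:)
  also have "\<dots> = E / (E + 1)"
    using E by (simp add: field_simps)
  also have "\<dots> \<le> 1 - S"
    using \<open>E \<le> (1 - S) * (E + 1)\<close> E by (simp add: pos_divide_le_eq)
  finally show "1 / (1 + P powr (-3.85)) \<le> 1 - S" .
  show "1 / (1 - S) \<le> 1 + 1 / P powr 3.85"
    using \<open>E \<le> (1 - S) * (E + 1)\<close> \<open>S < 1\<close> E unfolding E_def[symmetric]
    by (simp add: field_simps)
qed

lemma norm_correction_tail_bounds:
  fixes chi :: "nat \<Rightarrow> complex"
  assumes norm_chi: "\<And>m. norm (chi m) \<le> 1" and P: "33 \<le> prime_seq (Suc n)"
  defines "u j \<equiv> correction_factor (chi (prime_seq (Suc (n + j)))) (prime_seq (Suc (n + j)))"
  shows "1 / (1 + real (prime_seq (Suc n)) powr (-3.85)) \<le> norm (\<Prod>j<J. u j)"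
    and "norm (\<Prod>j<J. u j) \<le> 1 + 1 / real (prime_seq (Suc n)) powr 3.85"
proof -
  define P where "P = real (prime_seq (Suc n))"
  define S where "S = 3 / (4 * (P - 1) ^ 4)"
  have "33 \<le> P"
    using assms by (simp add: P_def)
  note tail = tail_error_bounds[OF this, folded S_def]
  have "norm (u j - 1) \<le> 3 / (P + real j) ^ 5" for j
  proof -
    have "P + real j \<le> real (prime_seq (Suc (n + j)))"
      using prime_seq_Suc_add_ge[of n j] by (simp add: P_def)
    moreover have "norm (u j - 1) \<le> 3 / real (prime_seq (Suc (n + j))) ^ 5"
      unfolding u_def using \<open>33 \<le> P\<close> calculation
      by (intro norm_correction_factor_sub_1_le norm_chi) linarith
    ultimately show ?thesis
      using \<open>33 \<le> P\<close> by (elim order.trans) (intro divide_left_mono power_mono; simp)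
  qed
  moreover have "(\<Sum>j<J. 3 / (P + real j) ^ 5) = 3 * (\<Sum>j<J. 1 / (P + real j) ^ 5)"
    by (simp add: sum_distrib_left)
  then have sum: "(\<Sum>j<J. 3 / (P + real j) ^ 5) \<le> S"
    using sum_inverse_power5_le[of P J] \<open>33 \<le> P\<close> unfolding S_def by simp
  moreover have "0 \<le> 3 / (P + real j) ^ 5" for j
    using \<open>33 \<le> P\<close> by simp
  ultimately have "1 - (\<Sum>j<J. 3 / (P + real j) ^ 5) \<le> norm (\<Prod>j<J. u j)
      \<and> norm (\<Prod>j<J. u j) \<le> 1 / (1 - (\<Sum>j<J. 3 / (P + real j) ^ 5))"
    using tail(1) by (intro norm_prod_bounds) auto
  moreover have "1 / (1 - (\<Sum>j<J. 3 / (P + real j) ^ 5)) \<le> 1 / (1 - S)"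
    using sum tail(1) by (intro divide_left_mono mult_pos_pos) auto
  ultimately have "1 - S \<le> norm (\<Prod>j<J. u j) \<and> norm (\<Prod>j<J. u j) \<le> 1 / (1 - S)"
    using sum by linarith
  then show "1 / (1 + real (prime_seq (Suc n)) powr (-3.85)) \<le> norm (\<Prod>j<J. u j)"
    and "norm (\<Prod>j<J. u j) \<le> 1 + 1 / real (prime_seq (Suc n)) powr 3.85"
    using tail(2,3) unfolding P_def by linarith+
qed

theorem mainTheorem15:
  fixes q n :: nat and chi :: "nat \<Rightarrow> complex"
  assumes "dirichlet_character q chi" and "n \<ge> 31"
  shows "\<exists>R1 :: complex.
     B_char chi = R1 * complex_of_real artin_A * dirichlet_L chi 2 * dirichlet_L chi 3 * dirichlet_L chi 4 *
       (\<Prod>k=1..n. (1 + chi (prime_seq k) / (of_nat (prime_seq k) *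
                        (of_nat (prime_seq k) ^ 2 - of_nat (prime_seq k) - 1))) *
                   (1 - chi (prime_seq k) / of_nat (prime_seq k) ^ 3) *
                   (1 - chi (prime_seq k) / of_nat (prime_seq k) ^ 4))
     \<and> 1 / (1 + real (prime_seq (n + 1)) powr (-3.85)) \<le> cmod R1
     \<and> cmod R1 \<le> 1 + 1 / real (prime_seq (n + 1)) powr 3.85"
proof -
  define u where "u k = correction_factor (chi (prime_seq (Suc k))) (prime_seq (Suc k))" for k
  define F where "F = (\<Prod>k<n. u k)"
  define R1 where "R1 = B_char chi /
    (of_real artin_A * dirichlet_L chi 2 * dirichlet_L chi 3 * dirichlet_L chi 4) / F"
  have "F \<noteq> 0" and "(\<lambda>J. \<Prod>j<J. u (n + j)) \<longlonglongrightarrow> R1"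
    using tendsto_correction_tail[OF assms(1), of n] unfolding F_def R1_def u_def by simp_all
  moreover have "33 \<le> prime_seq (Suc n)"
    using prime_seq_Suc_ge[of n] assms(2) by simp
  note tail = norm_correction_tail_bounds[of chi, OF dirichlet_character_norm_le_1[OF assms(1)] this]
  ultimately have "1 / (1 + real (prime_seq (Suc n)) powr (-3.85)) \<le> cmod R1"
    and "cmod R1 \<le> 1 + 1 / real (prime_seq (Suc n)) powr 3.85"
    unfolding u_def
    by (auto intro!: tendsto_lowerbound[OF tendsto_norm] tendsto_upperbound[OF tendsto_norm] tail)
  moreover have "B_char chi = R1 * of_real artin_A * dirichlet_L chi 2 * dirichlet_L chi 3 *
      dirichlet_L chi 4 * F"
    using \<open>F \<noteq> 0\<close> artin_A_nonzero dirichlet_L_nonzero[OF assms(1)]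
    unfolding R1_def by (simp add: field_simps)
  ultimately show ?thesis
    unfolding F_def u_def correction_factor_def
    by (intro exI[of _ R1]) (simp add: prod.atLeast1_atMost_eq)
qed

end
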